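(* Let $a<b$ be real numbers and let $h,g:[a,b)\to\mathbb{R}$ be continuous functions which are differentiable on $(a,b)$, with $h'(t)>0$ for all $t\in(a,b)$, and such that $h$ is increasing and not constant on any neighborhood of $a$. For $x\in(a,b)$ let $\xi(x)$ be the supremum of the set of numbers $\tau\in(a,x)$ satisfying $$\frac{g(x)-g(a)}{h(x)-h(a)}=\frac{g'(\tau)}{h'(\tau)}$$ (this set is nonempty by Cauchy's mean value theorem). Suppose that the limit $\lim_{x\to a}\frac{g(x)-g(a)}{h(x)-h(a)}$ exists and is finite. Then $$\varlimsup_{x\to a}\frac{h(\xi(x))-h(a)}{h(x)-h(a)}\ \geq\ \frac1e.$$
   Context: Limits at $a$ are right-hand limits. *)

theory Defs
  imports "HOL-Analysis.Analysis"
begin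

definition cmv_xi ::
  "(real \<Rightarrow> real) \<Rightarrow> (real \<Rightarrow> real) \<Rightarrow> (real \<Rightarrow> real) \<Rightarrow> (real \<Rightarrow> real) \<Rightarrow> real \<Rightarrow> real \<Rightarrow> real" where
  "cmv_xi h g h' g' a x =
     Sup {\<tau> \<in> {a<..<x}. (g x - g a) / (h x - h a) = g' \<tau> / h' \<tau>}"

end

theory Submission
  imports Defs
begin

text \<open>Reparametrise by \<open>s = h t - h a\<close> and put \<open>F s = g t - g a\<close>; the quotients become the
  slopes \<open>q s = F s / s\<close> of the lines through the origin, and they converge to \<open>L\<close>. If the limsup
  were below some \<open>c < 1/e\<close>, then near \<open>0\<close> no chord of \<open>F\<close> over a window \<open>[c \<sigma>, \<sigma>]\<close> could have
  slope \<open>q \<sigma>\<close>, since by Rolle's theorem it would produce a Cauchy mean value point above the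
  level \<open>c \<sigma>\<close>. Hence \<open>q (c \<sigma>) - q \<sigma>\<close> never vanishes and has a constant sign, say negative.
  Writing \<open>c = u ^ n\<close> and sampling \<open>q\<close> along \<open>\<sigma> i = u ^ i * S\<close>, the windows force
  \<open>\<sigma> (i + n) (q (i + n) - q i) < \<sigma> m (q m - q i) < 0\<close> for \<open>i < m < i + n\<close>; telescoping and letting
  \<open>i \<rightarrow> \<infinity>\<close> yields \<open>n (1 - u) \<le> 1\<close>, which fails for a suitable \<open>n\<close> exactly when \<open>c < 1/e\<close>.\<close>

lemma inj_on_diff_scaled_if_deriv_ne:
  fixes G H :: "real \<Rightarrow> real" and k y x :: real
  assumes cont_G: "continuous_on {y..x} G" and cont_H: "continuous_on {y..x} H"
    and G': "\<And>t. y < t \<Longrightarrow> t < x \<Longrightarrow> (G has_real_derivative G' t) (at t)"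
    and H': "\<And>t. y < t \<Longrightarrow> t < x \<Longrightarrow> (H has_real_derivative H' t) (at t)"
    and no_root: "\<And>t. y < t \<Longrightarrow> t < x \<Longrightarrow> G' t \<noteq> k * H' t"
  shows "inj_on (\<lambda>t. G t - k * H t) {y..x}"
proof (rule linorder_inj_onI')
  fix t1 t2 assume t: "t1 \<in> {y..x}" "t2 \<in> {y..x}" "t1 < t2"
  then have sub: "{t1..t2} \<subseteq> {y..x}"
    by auto
  have deriv: "((\<lambda>t. G t - k * H t) has_real_derivative G' t - k * H' t) (at t)"
    if "t1 < t" "t < t2" for t
    using that t by (intro DERIV_diff DERIV_cmult G' H') auto
  show "G t1 - k * H t1 \<noteq> G t2 - k * H t2"
  proof
    assume eq: "G t1 - k * H t1 = G t2 - k * H t2"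
    have "continuous_on {t1..t2} (\<lambda>t. G t - k * H t)"
      by (intro continuous_intros continuous_on_subset[OF cont_G sub] continuous_on_subset[OF cont_H sub])
    then obtain z where z: "t1 < z" "z < t2" "((\<lambda>t. G t - k * H t) has_real_derivative 0) (at z)"
      using Rolle[OF \<open>t1 < t2\<close> eq] deriv real_differentiable_def by blast
    then have "G' z - k * H' z = 0"
      using DERIV_unique[OF deriv] by blast
    then show False
      using no_root[of z] z t by auto
  qed
qed

lemma strict_mono_on_if_deriv_pos:
  fixes f f' :: "real \<Rightarrow> real" and a b :: real
  assumes cont: "continuous_on {a..b} f"
    and f': "\<And>t. t \<in> {a<..<b} \<Longrightarrow> (f has_real_derivative f' t) (at t)"
    and pos: "\<And>t. t \<in> {a<..<b} \<Longrightarrow> 0 < f' t"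
  shows "strict_mono_on {a..b} f"
proof (rule strict_mono_onI)
  fix s t assume "s \<in> {a..b}" "t \<in> {a..b}" "s < t"
  then show "f s < f t"
    using f' pos
    by (intro DERIV_pos_imp_increasing_open[OF \<open>s < t\<close>] continuous_on_subset[OF cont]) force+
qed

lemma strict_mono_on_inverse:
  fixes f :: "real \<Rightarrow> real" and a b :: real
  assumes "a \<le> b" and cont: "continuous_on {a..b} f" and mono: "strict_mono_on {a..b} f"
  shows "f ` {a..b} = {f a..f b}"
    and "continuous_on {f a..f b} (the_inv_into {a..b} f)"
    and "s \<in> {f a..f b} \<Longrightarrow> the_inv_into {a..b} f s \<in> {a..b}"
    and "s \<in> {f a..f b} \<Longrightarrow> f (the_inv_into {a..b} f s) = s"
proof -
  have inj: "inj_on f {a..b}"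
    using strict_mono_on_imp_inj_on[OF mono] .
  show image: "f ` {a..b} = {f a..f b}"
  proof
    show "f ` {a..b} \<subseteq> {f a..f b}"
      using \<open>a \<le> b\<close> by (auto intro!: strict_mono_on_leD[OF mono])
    show "{f a..f b} \<subseteq> f ` {a..b}"
      using IVT'[of f a _ b] cont \<open>a \<le> b\<close> by force
  qed
  show "continuous_on {f a..f b} (the_inv_into {a..b} f)"
    using continuous_on_inv_into[OF cont compact_Icc inj] unfolding image .
  show "s \<in> {f a..f b} \<Longrightarrow> the_inv_into {a..b} f s \<in> {a..b}"
    using the_inv_into_into[OF inj _ order_refl] image by blast
  show "s \<in> {f a..f b} \<Longrightarrow> f (the_inv_into {a..b} f s) = s"
    using f_the_inv_into_f[OF inj] image by blast
qed

lemma strict_mono_on_inverse_tendsto_at_right: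
  fixes f :: "real \<Rightarrow> real" and a b :: real
  assumes "a < b" and cont: "continuous_on {a..b} f" and mono: "strict_mono_on {a..b} f"
  shows "filterlim (the_inv_into {a..b} f) (at_right a) (at_right (f a))"
proof -
  let ?g = "the_inv_into {a..b} f"
  note inverse = strict_mono_on_inverse[OF less_imp_le[OF \<open>a < b\<close>] cont mono]
  have "f a < f b"
    using mono \<open>a < b\<close> by (simp add: strict_mono_on_less)
  then have "(?g \<longlongrightarrow> ?g (f a)) (at_right (f a))"
    using inverse(2) by (auto simp: continuous_on_def at_within_Icc_at_right[symmetric])
  moreover have "?g (f a) = a"
    using the_inv_into_f_f[OF strict_mono_on_imp_inj_on[OF mono]] \<open>a < b\<close> by simp
  moreover have "\<forall>\<^sub>F s in at_right (f a). a < ?g s"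
    unfolding eventually_at_right_field
  proof (intro exI conjI allI impI)
    fix s assume s: "f a < s" "s < f b"
    then show "a < ?g s"
      using inverse(3,4)[of s] by (cases "?g s = a") auto
  qed (fact \<open>f a < f b\<close>)
  ultimately show ?thesis
    by (intro tendsto_imp_filterlim_at_right) simp_all
qed

text \<open>\<open>n (1 - c powr (1 / n))\<close> increases to \<open>ln (1/c)\<close> as \<open>n \<rightarrow> \<infinity>\<close>, and \<open>ln (1/c) > 1\<close> exactly when
  \<open>c < 1/e\<close>: this is where the constant of the theorem comes from.\<close>
lemma nth_root_gap_exceeds_one:
  fixes c :: real
  assumes "0 < c" "c < exp (-1)"
  obtains n :: nat and u :: real where "0 < u" "u < 1" "u ^ n = c" "1 < real n * (1 - u)"
proof -
  define k where "k = - ln c"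
  have k: "1 < k"
    unfolding k_def using assms by (metis exp_less_cancel_iff exp_ln less_minus_iff minus_minus)
  define n where "n = nat \<lceil>k / ln k\<rceil> + 1"
  have "k / ln k < real n" "0 < real n"
    unfolding n_def by linarith simp
  then have n: "0 < real n" "k / real n < ln k"
    using k by (auto simp: field_simps)
  define u where "u = exp (- k / real n)"
  have "u ^ n = exp (- k)"
    using n unfolding u_def by (simp add: exp_of_nat_mult[symmetric])
  then have "u ^ n = c"
    unfolding k_def using assms by simp
  moreover have "1 + k / real n \<le> exp (k / real n)"
    by (rule exp_ge_add_one_self)
  then have "k * u \<le> real n * (1 - u)"
    using n by (simp add: u_def exp_minus field_simps)
  moreover have "exp (k / real n) < k"
    using n k by (metis exp_less_cancel_iff exp_ln less_trans zero_less_one)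
  then have "1 < k * u"
    by (simp add: u_def exp_minus field_simps)
  moreover have "0 < u" "u < 1"
    using n k by (auto simp: u_def)
  ultimately show ?thesis
    using that by force
qed

lemma sum_lessThan_diff_shift:
  fixes f :: "nat \<Rightarrow> 'a::ab_group_add"
  shows "(\<Sum>i<N. f i - f (i + n)) = (\<Sum>j<n. f j) - (\<Sum>j<n. f (N + j))"
proof (induction N)
  case (Suc N)
  have "(\<Sum>j<n. f (N + j)) - (\<Sum>j<n. f (Suc N + j)) = f N - f (N + n)"
    using sum_lessThan_telescope'[of "\<lambda>j. f (N + j)" n] by (simp add: sum_subtractf)
  then have "(\<Sum>i<Suc N. f i - f (i + n))
      = ((\<Sum>j<n. f j) - (\<Sum>j<n. f (N + j))) + ((\<Sum>j<n. f (N + j)) - (\<Sum>j<n. f (Suc N + j)))"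
    by (simp only: sum.lessThan_Suc Suc.IH)
  then show ?case
    by simp
qed simp

lemma LIMSEQ_less_if_shift_decreasing:
  fixes p :: "nat \<Rightarrow> real"
  assumes lim: "p \<longlonglongrightarrow> L" and decr: "\<And>i. p (i + n) < p i"
  shows "L < p i"
proof -
  have "n \<noteq> 0"
    using decr[of 0] by (cases n) auto
  then have "strict_mono (\<lambda>k. i + k * n)"
    by (intro strict_monoI) simp
  then have "(\<lambda>k. p (i + k * n)) \<longlonglongrightarrow> L"
    using LIMSEQ_subseq_LIMSEQ[OF lim] by (simp add: o_def)
  moreover have "decseq (\<lambda>k. p (i + k * n))"
  proof (rule decseq_SucI)
    fix k
    show "p (i + Suc k * n) \<le> p (i + k * n)"
      using decr[of "i + k * n"] by (simp add: add.assoc add.commute[of n])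
  qed
  ultimately have "L \<le> p (i + n)"
    using decseq_ge[of "\<lambda>k. p (i + k * n)" L 1] by simp
  then show ?thesis
    using decr[of i] by simp
qed

lemma telescoped_block_gap_limit:
  fixes p :: "nat \<Rightarrow> real" and u L :: real and m :: nat
  assumes lim: "p \<longlonglongrightarrow> L"
    and gap: "\<And>i. (1 - u) * (p i - p (i + Suc m)) \<le> p (i + m) - p (i + Suc m)"
  shows "(1 - u) * ((\<Sum>j<Suc m. p j) - real (Suc m) * L) \<le> p m - L"
proof -
  have partial: "(1 - u) * ((\<Sum>j<Suc m. p j) - (\<Sum>j<Suc m. p (N + j))) \<le> p m - p (N + m)" for N
  proof -
    have "(1 - u) * ((\<Sum>j<Suc m. p j) - (\<Sum>j<Suc m. p (N + j)))
        = (\<Sum>i<N. (1 - u) * (p i - p (i + Suc m)))"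
      by (simp only: sum_distrib_left[symmetric] sum_lessThan_diff_shift)
    also have "\<dots> \<le> (\<Sum>i<N. p (i + m) - p (Suc i + m))"
      using gap by (intro sum_mono) simp
    also have "\<dots> = p m - p (N + m)"
      using sum_lessThan_telescope'[of "\<lambda>i. p (i + m)" N] by simp
    finally show ?thesis .
  qed
  have "(\<lambda>N. (1 - u) * ((\<Sum>j<Suc m. p j) - (\<Sum>j<Suc m. p (N + j))))
      \<longlonglongrightarrow> (1 - u) * ((\<Sum>j<Suc m. p j) - (\<Sum>j<Suc m. L))"
    by (intro tendsto_intros LIMSEQ_ignore_initial_segment[OF lim, simplified add.commute])
  moreover have "(\<lambda>N. p m - p (N + m)) \<longlonglongrightarrow> p m - L"
    by (intro tendsto_intros LIMSEQ_ignore_initial_segment[OF lim])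
  ultimately show ?thesis
    using LIMSEQ_le[OF _ _ exI[of _ 0]] partial by auto
qed

lemma window_sequence_bound:
  fixes p :: "nat \<Rightarrow> real" and u L :: real
  assumes lim: "p \<longlonglongrightarrow> L" and u: "0 < u" "u < 1" and n: "2 \<le> n"
    and window: "\<And>i m. i < m \<Longrightarrow> m < i + n \<Longrightarrow>
      u ^ (i + n) * (p (i + n) - p i) < u ^ m * (p m - p i) \<and> u ^ m * (p m - p i) < 0"
  shows "real n * (1 - u) \<le> 1"
proof -
  obtain m where m: "n = Suc m" "1 \<le> m"
    using n by (cases n) auto
  have step: "p (i + n) < p i" for i
  proof -
    have "u ^ (i + n) * (p (i + n) - p i) < 0"
      using window[of i "Suc i"] m by fastforce
    then show ?thesis
      using u by (simp add: mult_less_0_iff)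
  qed
  have last_gap: "(1 - u) * (p i - p (i + Suc m)) \<le> p (i + m) - p (i + Suc m)" for i
  proof -
    have "u ^ (i + m) * (u * (p (i + n) - p i)) < u ^ (i + m) * (p (i + m) - p i)"
      using window[of i "i + m"] m by (simp add: algebra_simps)
    then have "u * (p (i + n) - p i) < p (i + m) - p i"
      using u by simp
    then show ?thesis
      using m by (simp add: algebra_simps)
  qed
  have first_block: "p m \<le> p j" if "j < n" for j
  proof (cases "j = m")
    case False
    then have "u ^ m * (p m - p j) < 0"
      using window[of j m] that m by auto
    then show ?thesis
      using u by (simp add: mult_less_0_iff)
  qed simp
  have "real n * p m \<le> (\<Sum>j<n. p j)"
    using sum_mono[of "{..<n}" "\<lambda>j. p m" p] first_block by auto
  then have "(1 - u) * (real n * (p m - L)) \<le> (1 - u) * ((\<Sum>j<n. p j) - real n * L)"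
    using u by (intro mult_left_mono) (auto simp: algebra_simps)
  also have "\<dots> \<le> p m - L"
    using telescoped_block_gap_limit[OF lim last_gap] m by simp
  finally have "(real n * (1 - u)) * (p m - L) \<le> 1 * (p m - L)"
    by (simp add: algebra_simps)
  moreover have "L < p m"
    using LIMSEQ_less_if_shift_decreasing[OF lim step] .
  ultimately show ?thesis
    by (simp add: mult_le_cancel_right_pos)
qed

text \<open>\<open>F s - k * s\<close> is injective on a window iff no chord of \<open>F\<close> over the window has slope
  \<open>k\<close>; here \<open>k = F \<sigma> / \<sigma>\<close> is the slope of the line through the origin and \<open>(\<sigma>, F \<sigma>)\<close>.\<close>
definition no_parallel_chords :: "(real \<Rightarrow> real) \<Rightarrow> real \<Rightarrow> real \<Rightarrow> bool" where
  "no_parallel_chords F S c \<longleftrightarrow> (\<forall>\<sigma>\<in>{0<..S}. inj_on (\<lambda>s. F s - F \<sigma> / \<sigma> * s) {c * \<sigma>..\<sigma>})"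

lemma no_parallel_chords_uminus:
  "no_parallel_chords F S c \<Longrightarrow> no_parallel_chords (\<lambda>s. - F s) S c"
  unfolding no_parallel_chords_def inj_on_def by (auto simp: algebra_simps)

lemma continuous_on_nonzero_sign:
  fixes f :: "'a::topological_space \<Rightarrow> real"
  assumes "connected A" "continuous_on A f" "\<And>x. x \<in> A \<Longrightarrow> f x \<noteq> 0"
  shows "(\<forall>x\<in>A. f x < 0) \<or> (\<forall>x\<in>A. 0 < f x)"
proof (rule ccontr)
  assume "\<not> ?thesis"
  then obtain x y where "x \<in> A" "y \<in> A" "f x < 0" "0 < f y"
    using assms(3) by (metis linorder_neqE_linordered_idom)
  moreover have "connected (f ` A)"
    using connected_continuous_image assms(1,2) by blast
  ultimately have "0 \<in> f ` A"
    unfolding connected_iff_interval by (meson imageI less_imp_le)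
  then show False
    using assms(3) by auto
qed

lemma no_parallel_chords_slope_comparison:
  fixes F :: "real \<Rightarrow> real"
  assumes S: "0 < S" and c: "0 < c" "c < 1" and cont: "continuous_on {0<..S} F"
    and chords: "no_parallel_chords F S c"
  shows "(\<forall>\<sigma>\<in>{0<..S}. F (c * \<sigma>) / (c * \<sigma>) < F \<sigma> / \<sigma>) \<or>
         (\<forall>\<sigma>\<in>{0<..S}. F \<sigma> / \<sigma> < F (c * \<sigma>) / (c * \<sigma>))"
proof -
  define q where "q \<sigma> = F \<sigma> / \<sigma>" for \<sigma>
  define D where "D \<sigma> = q (c * \<sigma>) - q \<sigma>" for \<sigma>
  have window: "c * \<sigma> \<in> {0<..S}" if "\<sigma> \<in> {0<..S}" for \<sigma>
    using that c by (auto intro: order_trans[OF mult_left_le_one_le])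
  have cont_q: "continuous_on {0<..S} q"
    unfolding q_def by (intro continuous_intros cont) auto
  have "continuous_on {0<..S} (\<lambda>\<sigma>. q (c * \<sigma>))"
    using window by (intro continuous_on_compose2[OF cont_q]) (auto intro!: continuous_intros)
  then have "continuous_on {0<..S} D"
    unfolding D_def by (intro continuous_intros cont_q)
  moreover have "D \<sigma> \<noteq> 0" if \<sigma>: "\<sigma> \<in> {0<..S}" for \<sigma>
  proof
    assume "D \<sigma> = 0"
    have "inj_on (\<lambda>s. F s - F \<sigma> / \<sigma> * s) {c * \<sigma>..\<sigma>}"
      using chords \<sigma> unfolding no_parallel_chords_def by blast
    moreover have "F (c * \<sigma>) - F \<sigma> / \<sigma> * (c * \<sigma>) = F \<sigma> - F \<sigma> / \<sigma> * \<sigma>"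
      using \<open>D \<sigma> = 0\<close> \<sigma> c by (simp add: D_def q_def field_simps)
    moreover have "c * \<sigma> \<in> {c * \<sigma>..\<sigma>}" "\<sigma> \<in> {c * \<sigma>..\<sigma>}"
      using \<sigma> c by auto
    ultimately have "c * \<sigma> = \<sigma>"
      by (rule inj_onD)
    then show False
      using \<sigma> c by simp
  qed
  ultimately show ?thesis
    using continuous_on_nonzero_sign[of "{0<..S}" D] unfolding D_def q_def by auto
qed

lemma no_parallel_chords_between:
  fixes F :: "real \<Rightarrow> real" and S c \<sigma> \<rho> :: real
  assumes cont: "continuous_on {0<..S} F" and chords: "no_parallel_chords F S c" and "0 < c"
    and \<sigma>: "\<sigma> \<in> {0<..S}" and less: "F (c * \<sigma>) / (c * \<sigma>) < F \<sigma> / \<sigma>"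
    and \<rho>: "c * \<sigma> < \<rho>" "\<rho> < \<sigma>"
  shows "F (c * \<sigma>) - F \<sigma> / \<sigma> * (c * \<sigma>) < F \<rho> - F \<sigma> / \<sigma> * \<rho>"
    and "F \<rho> - F \<sigma> / \<sigma> * \<rho> < 0"
proof -
  define \<phi> where "\<phi> s = F s - F \<sigma> / \<sigma> * s" for s
  have "0 < c * \<sigma>"
    using \<sigma> \<open>0 < c\<close> by simp
  then have "{c * \<sigma>..\<sigma>} \<subseteq> {0<..S}"
    using \<sigma> by auto
  then have "continuous_on {c * \<sigma>..\<sigma>} \<phi>"
    unfolding \<phi>_def by (intro continuous_intros continuous_on_subset[OF cont])
  moreover have "inj_on \<phi> {c * \<sigma>..\<sigma>}"
    using chords \<sigma> unfolding no_parallel_chords_def \<phi>_def by blast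
  ultimately have "(\<phi> (c * \<sigma>) < \<phi> \<rho> \<and> \<phi> \<rho> < \<phi> \<sigma>) \<or> (\<phi> \<sigma> < \<phi> \<rho> \<and> \<phi> \<rho> < \<phi> (c * \<sigma>))"
    using continuous_inj_imp_mono[OF \<rho>] by blast
  moreover have "\<phi> (c * \<sigma>) < 0" "\<phi> \<sigma> = 0"
    using less \<sigma> \<open>0 < c\<close> by (simp_all add: \<phi>_def field_simps)
  ultimately show "\<phi> (c * \<sigma>) < \<phi> \<rho>" "\<phi> \<rho> < 0"
    by auto
qed

lemma no_parallel_chords_decreasing_bound:
  fixes F :: "real \<Rightarrow> real" and S L u :: real and n :: nat
  assumes S: "0 < S" and cont: "continuous_on {0<..S} F"
    and lim: "((\<lambda>s. F s / s) \<longlongrightarrow> L) (at_right 0)"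
    and u: "0 < u" "u < 1" and n: "2 \<le> n"
    and chords: "no_parallel_chords F S (u ^ n)"
    and decr: "\<And>\<sigma>. \<sigma> \<in> {0<..S} \<Longrightarrow> F (u ^ n * \<sigma>) / (u ^ n * \<sigma>) < F \<sigma> / \<sigma>"
  shows "real n * (1 - u) \<le> 1"
proof -
  define \<sigma> where "\<sigma> i = u ^ i * S" for i
  define p where "p i = F (\<sigma> i) / \<sigma> i" for i
  have \<sigma>_mem: "\<sigma> i \<in> {0<..S}" for i
    using S u by (auto simp: \<sigma>_def power_le_one mult_left_le_one_le)
  have "\<sigma> \<longlonglongrightarrow> 0"
    unfolding \<sigma>_def using u by (intro tendsto_mult_left_zero LIMSEQ_power_zero) auto
  then have "filterlim \<sigma> (at_right 0) sequentially"
    using \<sigma>_mem by (intro tendsto_imp_filterlim_at_right) auto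
  then have p_lim: "p \<longlonglongrightarrow> L"
    unfolding p_def using filterlim_compose[OF lim] by blast
  have chord_grid: "F (\<sigma> j) - p i * \<sigma> j = S * (u ^ j * (p j - p i))" for i j
  proof -
    have "F (\<sigma> j) = p j * \<sigma> j"
      using \<sigma>_mem[of j] by (simp add: p_def)
    then show ?thesis
      by (simp add: \<sigma>_def algebra_simps)
  qed
  have window: "u ^ (i + n) * (p (i + n) - p i) < u ^ m * (p m - p i) \<and> u ^ m * (p m - p i) < 0"
    if "i < m" "m < i + n" for i m
  proof -
    have window_end: "\<sigma> (i + n) = u ^ n * \<sigma> i"
      by (simp add: \<sigma>_def power_add)
    have "\<sigma> (i + n) < \<sigma> m" "\<sigma> m < \<sigma> i"
      using S u that by (simp_all add: \<sigma>_def power_strict_decreasing)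
    then show ?thesis
      using no_parallel_chords_between[OF cont chords _ \<sigma>_mem[of i] decr[OF \<sigma>_mem[of i]],
          where \<rho> = "\<sigma> m"] u S
      by (simp add: window_end[symmetric] p_def[symmetric] chord_grid mult_less_0_iff)
  qed
  show ?thesis
    using window_sequence_bound[OF p_lim u n window] .
qed

lemma no_parallel_chords_imp_exp_neg1_le:
  fixes F :: "real \<Rightarrow> real" and S L c :: real
  assumes S: "0 < S" and cont: "continuous_on {0<..S} F"
    and lim: "((\<lambda>s. F s / s) \<longlongrightarrow> L) (at_right 0)"
    and c: "0 < c" and chords: "no_parallel_chords F S c"
  shows "exp (-1) \<le> c"
proof (rule ccontr)
  assume "\<not> exp (-1) \<le> c"
  then have "c < exp (-1)"
    by simp
  then obtain n u where u: "0 < u" "u < 1" and c_eq: "u ^ n = c" and gap: "1 < real n * (1 - u)"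
    by (rule nth_root_gap_exceeds_one[OF c])
  have "real n * (1 - u) \<le> real n"
    using u by (intro mult_right_le_one_le) auto
  then have "2 \<le> n"
    using gap by simp
  have "c < 1"
    unfolding c_eq[symmetric] using u \<open>2 \<le> n\<close> by (simp add: power_less_one_iff)
  from no_parallel_chords_slope_comparison[OF S c this cont chords]
  have "real n * (1 - u) \<le> 1"
  proof
    assume "\<forall>\<sigma>\<in>{0<..S}. F (c * \<sigma>) / (c * \<sigma>) < F \<sigma> / \<sigma>"
    then show ?thesis
      using no_parallel_chords_decreasing_bound[OF S cont lim u \<open>2 \<le> n\<close>] chords c_eq by blast
  next
    assume "\<forall>\<sigma>\<in>{0<..S}. F \<sigma> / \<sigma> < F (c * \<sigma>) / (c * \<sigma>)"
    moreover have "((\<lambda>s. - F s / s) \<longlongrightarrow> - L) (at_right 0)"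
      using tendsto_minus[OF lim] by simp
    ultimately show ?thesis
      using no_parallel_chords_decreasing_bound[OF S _ _ u \<open>2 \<le> n\<close>, of "\<lambda>s. - F s" "- L"]
        continuous_on_minus[OF cont] no_parallel_chords_uminus[OF chords] c_eq by auto
  qed
  then show False
    using gap by simp
qed

lemma cmv_xi_bounds:
  fixes h g h' g' :: "real \<Rightarrow> real" and a x t :: real
  assumes "t \<in> {a<..<x}" and "(g x - g a) / (h x - h a) = g' t / h' t"
  shows "t \<le> cmv_xi h g h' g' a x" and "cmv_xi h g h' g' a x \<le> x"
  unfolding cmv_xi_def using assms by (auto intro!: cSup_upper cSup_least bdd_aboveI[of _ x])

lemma inj_on_chord_window_if_cmv_xi_below:
  fixes h g h' g' :: "real \<Rightarrow> real" and a y x :: real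
  assumes "a \<le> y" and mono: "strict_mono_on {a..x} h"
    and cont_h: "continuous_on {y..x} h" and cont_g: "continuous_on {y..x} g"
    and h': "\<And>t. y < t \<Longrightarrow> t < x \<Longrightarrow> (h has_real_derivative h' t) (at t)"
    and g': "\<And>t. y < t \<Longrightarrow> t < x \<Longrightarrow> (g has_real_derivative g' t) (at t)"
    and h'_pos: "\<And>t. y < t \<Longrightarrow> t < x \<Longrightarrow> 0 < h' t"
    and below: "h (cmv_xi h g h' g' a x) \<le> h y"
  shows "inj_on (\<lambda>t. (g t - g a) - (g x - g a) / (h x - h a) * (h t - h a)) {y..x}"
proof (rule inj_on_diff_scaled_if_deriv_ne)
  show "continuous_on {y..x} (\<lambda>t. g t - g a)" "continuous_on {y..x} (\<lambda>t. h t - h a)"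
    by (intro continuous_intros cont_g cont_h)+
  fix t assume t: "y < t" "t < x"
  show "((\<lambda>t. g t - g a) has_real_derivative g' t) (at t)"
    "((\<lambda>t. h t - h a) has_real_derivative h' t) (at t)"
    using DERIV_diff[OF g'[OF t] DERIV_const] DERIV_diff[OF h'[OF t] DERIV_const] by simp_all
  show "g' t \<noteq> (g x - g a) / (h x - h a) * h' t"
  proof
    assume "g' t = (g x - g a) / (h x - h a) * h' t"
    then have "(g x - g a) / (h x - h a) = g' t / h' t"
      using h'_pos[OF t] by simp
    then have "t \<le> cmv_xi h g h' g' a x" "cmv_xi h g h' g' a x \<le> x"
      using cmv_xi_bounds[of t a x] t \<open>a \<le> y\<close> by auto
    then have "h t \<le> h (cmv_xi h g h' g' a x)" "h y < h t"
      using strict_mono_on_less_eq[OF mono] strict_mono_on_less[OF mono] t \<open>a \<le> y\<close> by auto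
    then show False
      using below by simp
  qed
qed

lemma no_parallel_chords_comp_inverse:
  fixes G H :: "real \<Rightarrow> real" and a x0 c :: real
  assumes "a < x0" and cont_H: "continuous_on {a..x0} H" and mono: "strict_mono_on {a..x0} H"
    and "H a = 0" and c: "0 < c" "c < 1"
    and window: "\<And>y x. a < y \<Longrightarrow> y < x \<Longrightarrow> x \<le> x0 \<Longrightarrow> H y = c * H x \<Longrightarrow>
      inj_on (\<lambda>t. G t - G x / H x * H t) {y..x}"
  shows "no_parallel_chords (\<lambda>s. G (the_inv_into {a..x0} H s)) (H x0) c"
  unfolding no_parallel_chords_def
proof
  let ?Hi = "the_inv_into {a..x0} H"
  note inverse = strict_mono_on_inverse[OF less_imp_le[OF \<open>a < x0\<close>] cont_H mono]
  have Hi_le_iff: "?Hi s \<le> ?Hi r \<longleftrightarrow> s \<le> r" if "s \<in> {0..H x0}" "r \<in> {0..H x0}" for s r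
    using strict_mono_on_less_eq[OF mono] inverse(3,4) that \<open>H a = 0\<close> by metis
  fix \<sigma> assume \<sigma>: "\<sigma> \<in> {0<..H x0}"
  define x where "x = ?Hi \<sigma>"
  define y where "y = ?Hi (c * \<sigma>)"
  have ends: "c * \<sigma> \<in> {0..H x0}" "\<sigma> \<in> {0..H x0}"
    using \<sigma> c by (auto intro: order_trans[OF mult_left_le_one_le])
  then have window_sub: "{c * \<sigma>..\<sigma>} \<subseteq> {0..H x0}"
    by auto
  have x_mem: "x \<in> {a..x0}" and y_mem: "y \<in> {a..x0}" and Hx: "H x = \<sigma>" and Hy: "H y = c * \<sigma>"
    using inverse(3,4) ends \<open>H a = 0\<close> by (auto simp: x_def y_def)
  have "H a < H y" "H y < H x"
    using Hx Hy \<sigma> c \<open>H a = 0\<close> by simp_all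
  then have "a < y" "y < x" "x \<le> x0"
    using strict_mono_on_less[OF mono _ y_mem] strict_mono_on_less[OF mono y_mem x_mem] x_mem \<open>a < x0\<close>
    by auto
  then have inj_y_x: "inj_on (\<lambda>t. G t - G x / H x * H t) {y..x}"
    using window Hx Hy by blast
  have inj_Hi: "inj_on ?Hi {c * \<sigma>..\<sigma>}"
    using window_sub inverse(4) \<open>H a = 0\<close> by (intro inj_onI) (metis subsetD)
  have "?Hi ` {c * \<sigma>..\<sigma>} \<subseteq> {y..x}"
    using Hi_le_iff window_sub by (auto simp: x_def y_def subset_iff)
  then have "inj_on (\<lambda>s. G (?Hi s) - G x / H x * H (?Hi s)) {c * \<sigma>..\<sigma>}"
    using comp_inj_on[OF inj_Hi inj_on_subset[OF inj_y_x]] by (simp add: comp_def)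
  moreover have "H (?Hi s) = s" if "s \<in> {c * \<sigma>..\<sigma>}" for s
    using inverse(4) window_sub that \<open>H a = 0\<close> by auto
  ultimately show "inj_on (\<lambda>s. G (?Hi s) - G (?Hi \<sigma>) / \<sigma> * s) {c * \<sigma>..\<sigma>}"
    using Hx unfolding x_def by (simp add: inj_on_def)
qed

lemma tendsto_quotient_comp_inverse:
  fixes G H :: "real \<Rightarrow> real" and a x0 L :: real
  assumes "a < x0" and cont_H: "continuous_on {a..x0} H" and mono: "strict_mono_on {a..x0} H"
    and "H a = 0" and lim: "((\<lambda>x. G x / H x) \<longlongrightarrow> L) (at_right a)"
  shows "((\<lambda>s. G (the_inv_into {a..x0} H s) / s) \<longlongrightarrow> L) (at_right 0)"
proof -
  let ?Hi = "the_inv_into {a..x0} H"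
  have "filterlim ?Hi (at_right a) (at_right 0)"
    using strict_mono_on_inverse_tendsto_at_right[OF \<open>a < x0\<close> cont_H mono] \<open>H a = 0\<close> by simp
  then have "((\<lambda>s. G (?Hi s) / H (?Hi s)) \<longlongrightarrow> L) (at_right 0)"
    using filterlim_compose[OF lim] by blast
  moreover have "H a < H x0"
    using strict_mono_on_less[OF mono, of a x0] \<open>a < x0\<close> by simp
  then have "\<forall>\<^sub>F s in at_right 0. G (?Hi s) / H (?Hi s) = G (?Hi s) / s"
    unfolding eventually_at_right_field
    using strict_mono_on_inverse(4)[OF less_imp_le[OF \<open>a < x0\<close>] cont_H mono] \<open>H a = 0\<close>
    by (auto intro!: exI[of _ "H x0"])
  ultimately show ?thesis
    by (rule Lim_transform_eventually)
qed

lemma exp_neg1_le_if_cmv_xi_ratio_below: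
  fixes a x0 c L :: real and h g h' g' :: "real \<Rightarrow> real"
  assumes "a < x0"
    and cont_h: "continuous_on {a..x0} h" and cont_g: "continuous_on {a..x0} g"
    and h': "\<And>t. t \<in> {a<..<x0} \<Longrightarrow> (h has_real_derivative h' t) (at t)"
    and g': "\<And>t. t \<in> {a<..<x0} \<Longrightarrow> (g has_real_derivative g' t) (at t)"
    and h'_pos: "\<And>t. t \<in> {a<..<x0} \<Longrightarrow> 0 < h' t"
    and lim: "((\<lambda>x. (g x - g a) / (h x - h a)) \<longlongrightarrow> L) (at_right a)"
    and c: "0 < c" "c < 1"
    and below: "\<And>x. x \<in> {a<..x0} \<Longrightarrow> (h (cmv_xi h g h' g' a x) - h a) / (h x - h a) < c"
  shows "exp (-1) \<le> c"
proof -
  define H where "H t = h t - h a" for t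
  define Hi where "Hi = the_inv_into {a..x0} H"
  define F where "F s = g (Hi s) - g a" for s
  have mono_h: "strict_mono_on {a..x0} h"
    using strict_mono_on_if_deriv_pos[OF cont_h h' h'_pos] .
  then have mono: "strict_mono_on {a..x0} H"
    by (auto simp: H_def strict_mono_on_def)
  have cont_H: "continuous_on {a..x0} H"
    unfolding H_def by (intro continuous_intros cont_h)
  note inverse = strict_mono_on_inverse[OF less_imp_le[OF \<open>a < x0\<close>] cont_H mono]
  have S: "0 < H x0"
    using strict_mono_on_less[OF mono_h, of a x0] \<open>a < x0\<close> by (simp add: H_def)
  have cont_F: "continuous_on {0<..H x0} F"
    unfolding F_def Hi_def using inverse(3)
    by (intro continuous_intros continuous_on_compose2[OF cont_g continuous_on_subset[OF inverse(2)]])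
      (auto simp: H_def)
  have lim_F: "((\<lambda>s. F s / s) \<longlongrightarrow> L) (at_right 0)"
    using tendsto_quotient_comp_inverse[OF \<open>a < x0\<close> cont_H mono, of "\<lambda>t. g t - g a"] lim
    by (simp add: F_def Hi_def H_def)
  have "no_parallel_chords F (H x0) c"
    unfolding F_def Hi_def
  proof (rule no_parallel_chords_comp_inverse[OF \<open>a < x0\<close> cont_H mono _ c])
    fix y x assume yx: "a < y" "y < x" "x \<le> x0" "H y = c * H x"
    have "h (cmv_xi h g h' g' a x) - h a < c * (h x - h a)"
      using below[of x] strict_mono_on_less[OF mono_h, of a x] yx by (simp add: pos_divide_less_eq)
    then have "h (cmv_xi h g h' g' a x) \<le> h y"
      using yx(4) by (simp add: H_def)
    moreover have "{y..x} \<subseteq> {a..x0}" "{a..x} \<subseteq> {a..x0}"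
      using yx by auto
    ultimately show "inj_on (\<lambda>t. (g t - g a) - (g x - g a) / H x * H t) {y..x}"
      unfolding H_def using yx h' g' h'_pos
      by (intro inj_on_chord_window_if_cmv_xi_below[where h' = h' and g' = g'] monotone_on_subset[OF mono_h]
          continuous_on_subset[OF cont_h] continuous_on_subset[OF cont_g]) auto
  qed (simp add: H_def)
  then show ?thesis
    using no_parallel_chords_imp_exp_neg1_le[OF S cont_F lim_F c(1)] by blast
qed

lemma Limsup_at_right_less_imp_bound:
  fixes f :: "real \<Rightarrow> real" and a C :: real
  assumes "Limsup (at_right a) (\<lambda>x. ereal (f x)) < ereal C" and "0 < C"
  obtains c b' where "0 < c" "c < C" "a < b'" "\<And>x. a < x \<Longrightarrow> x < b' \<Longrightarrow> f x < c"
proof -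
  obtain c0 where "Limsup (at_right a) (\<lambda>x. ereal (f x)) < ereal c0" "c0 < C"
    using ereal_dense2[OF assms(1)] by auto
  moreover define c where "c = max c0 (C / 2)"
  ultimately have c: "0 < c" "c < C" "Limsup (at_right a) (\<lambda>x. ereal (f x)) < ereal c"
    using \<open>0 < C\<close> by (auto simp: c_def less_max_iff_disj intro: order.strict_trans2)
  then show ?thesis
    using that Limsup_lessD[OF c(3)] unfolding eventually_at_right_field by auto
qed

theorem theorem4:
  fixes a b :: real and h g h' g' :: "real \<Rightarrow> real"
  assumes "a < b"
    and "continuous_on {a..<b} h" and "continuous_on {a..<b} g"
    and "\<And>t. t \<in> {a<..<b} \<Longrightarrow> (h has_real_derivative h' t) (at t)"
    and "\<And>t. t \<in> {a<..<b} \<Longrightarrow> (g has_real_derivative g' t) (at t)"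
    and "\<And>t. t \<in> {a<..<b} \<Longrightarrow> h' t > 0"
    and "mono_on {a..<b} h"
    and "\<And>\<epsilon>. \<epsilon> > 0 \<Longrightarrow> \<not> (\<exists>c. \<forall>t \<in> {a..<b} \<inter> {a..<a+\<epsilon>}. h t = c)"
    and "\<exists>L. ((\<lambda>x. (g x - g a) / (h x - h a)) \<longlongrightarrow> L) (at_right a)"
  shows "Limsup (at_right a)
           (\<lambda>x. ereal ((h (cmv_xi h g h' g' a x) - h a) / (h x - h a))) \<ge> ereal (1 / exp 1)"
proof (rule ccontr)
  let ?r = "\<lambda>x. (h (cmv_xi h g h' g' a x) - h a) / (h x - h a)"
  obtain L where lim: "((\<lambda>x. (g x - g a) / (h x - h a)) \<longlongrightarrow> L) (at_right a)"
    using assms(9) by blast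
  assume "\<not> ?thesis"
  then have "Limsup (at_right a) (\<lambda>x. ereal (?r x)) < ereal (exp (-1))"
    by (simp add: exp_minus inverse_eq_divide)
  then obtain c b' where c: "0 < c" "c < exp (-1)" and "a < b'"
    and below: "\<And>x. a < x \<Longrightarrow> x < b' \<Longrightarrow> ?r x < c"
    by (rule Limsup_at_right_less_imp_bound[OF _ exp_gt_zero]) blast
  define x0 where "x0 = (a + min b' b) / 2"
  have x0: "a < x0" "x0 < b'" "x0 < b"
    unfolding x0_def using \<open>a < b'\<close> \<open>a < b\<close> by auto
  then have sub: "{a..x0} \<subseteq> {a..<b}"
    by auto
  have "exp (-1) \<le> c"
  proof (rule exp_neg1_le_if_cmv_xi_ratio_below[OF \<open>a < x0\<close>
        continuous_on_subset[OF assms(2) sub] continuous_on_subset[OF assms(3) sub] _ _ _ lim c(1)])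
    show "(h has_real_derivative h' t) (at t)" "(g has_real_derivative g' t) (at t)" "0 < h' t"
      if "t \<in> {a<..<x0}" for t
      using assms(4-6) that x0 by auto
    show "?r x < c" if "x \<in> {a<..x0}" for x
      using below that x0 by auto
    show "c < 1"
      using c(2) exp_less_one_iff[of "-1"] by linarith
  qed
  then show False
    using c(2) by simp
qed

end
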